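(* Let $X(t)$, $t\in\mathbb{R}$, be a zero-mean stationary Gaussian process whose covariance function $r(t)=\operatorname{Cov}(X(s),X(s+t))$ is twice continuously differentiable with $r''(0)<0$. Let $X_0$ be its Slepian model at level zero, $$X_0(t)=-R\,\frac{r'(t)}{\sqrt{-r''(0)}}+\Delta(t),\qquad t\ge 0,$$ where $R$ is a standard Rayleigh random variable (density $se^{-s^2/2}$, $s>0$) independent of a zero-mean Gaussian process $\Delta$ with covariance $r_\Delta(t,s)=r(t-s)-\frac{r(t)r(s)}{r(0)}+\frac{r'(t)r'(s)}{r''(0)}$. Let $E_0(t)=\mathbb{E}\,\operatorname{sgn}(X_0(t))$. Then for every $t>0$ with $|r(t)|<r(0)$, $$E_0(t)=-\sqrt{\frac{r(0)}{-r''(0)}}\;\frac{r'(t)}{\sqrt{r(0)^2-r(t)^2}}.$$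
   Context: $\operatorname{sgn}(x)=1$ for $x>0$ and $-1$ for $x\le 0$ (the sign at $0$ is irrelevant since $X_0(t)=0$ with probability zero at the considered $t$). $X_0$ describes the behaviour of $X$ seen from a zero upcrossing instant. *)

theory Defs
  imports "HOL-Probability.Probability"
begin

text \<open>Sign convention of the paper: sgn x = 1 for x > 0 and -1 for x \<le> 0.\<close>
definition sgn0 :: "real \<Rightarrow> real" where
  "sgn0 x = (if x > 0 then 1 else -1)"

text \<open>A real random variable is Gaussian if it is normally distributed with positive
  variance or almost surely constant (degenerate Gaussian).\<close>
definition gaussian_rv :: "'a measure \<Rightarrow> ('a \<Rightarrow> real) \<Rightarrow> bool" where
  "gaussian_rv M Y \<longleftrightarrow> Y \<in> borel_measurable M \<and>
     ((\<exists>\<mu> \<sigma>. \<sigma> > 0 \<and> distributed M lborel Y (normal_density \<mu> \<sigma>)) \<or>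
      (\<exists>c. AE \<omega> in M. Y \<omega> = c))"

definition gaussian_process :: "'a measure \<Rightarrow> real set \<Rightarrow> (real \<Rightarrow> 'a \<Rightarrow> real) \<Rightarrow> bool" where
  "gaussian_process M I X \<longleftrightarrow>
     (\<forall>t\<in>I. X t \<in> borel_measurable M) \<and>
     (\<forall>S c. finite S \<longrightarrow> S \<subseteq> I \<longrightarrow> gaussian_rv M (\<lambda>\<omega>. \<Sum>t\<in>S. c t * X t \<omega>))"

definition rayleigh_density :: "real \<Rightarrow> ennreal" where
  "rayleigh_density s = ennreal (if s > 0 then s * exp (- (s^2) / 2) else 0)"

end

(*
  At time t the Slepian model is X0 t = \<Delta> t - a R with a = r'(t) / sqrt (- r''(0)), where \<Delta> t is a
  centred Gaussian variable of variance v = r(0) - r(t)^2 / r(0) + r'(t)^2 / r''(0), independent of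
  the Rayleigh variable R.  Since P(R \<ge> c) = exp (- max c 0 ^ 2 / 2), conditioning on \<Delta> t = d gives
  E sgn (d - a R) = sgn a (1 - 2 exp (- max (d / a) 0 ^ 2 / 2)), and integrating this against the
  N(0, v) density is a Gaussian integral with value - a / sqrt (a^2 + v).  Finally
  a^2 + v = (r(0)^2 - r(t)^2) / r(0).
*)
theory Submission
  imports Defs "HOL-Real_Asymp.Real_Asymp"
begin

definition rayleigh_pdf :: "real \<Rightarrow> real" where
  "rayleigh_pdf s = (if s > 0 then s * exp (- (s\<^sup>2) / 2) else 0)"

lemma rayleigh_density_eq: "rayleigh_density = (\<lambda>s. ennreal (rayleigh_pdf s))"
  by (simp add: fun_eq_iff rayleigh_density_def rayleigh_pdf_def)

lemma rayleigh_pdf_nonneg: "0 \<le> rayleigh_pdf s"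
  by (simp add: rayleigh_pdf_def)

lemma borel_measurable_sgn0[measurable]: "sgn0 \<in> borel_measurable borel"
  unfolding sgn0_def[abs_def] by measurable

lemma borel_measurable_rayleigh_pdf[measurable]: "rayleigh_pdf \<in> borel_measurable borel"
  unfolding rayleigh_pdf_def by measurable

lemma has_bochner_integral_rayleigh_tail:
  "has_bochner_integral lborel (\<lambda>s. rayleigh_pdf s * indicator {c..} s) (exp (- (max c 0)\<^sup>2 / 2))"
proof -
  define c' where "c' = max c 0"
  have "(\<integral>\<^sup>+s. ennreal (s * exp (- s\<^sup>2 / 2)) * indicator {c'..} s \<partial>lborel)
      = ennreal (0 - (- exp (- c'\<^sup>2 / 2)))"
  proof (rule nn_integral_FTC_atLeast)
    fix x assume "c' \<le> x"
    then show "0 \<le> x * exp (- x\<^sup>2 / 2)"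
      by (simp add: c'_def)
    show "DERIV (\<lambda>s. - exp (- s\<^sup>2 / 2)) x :> x * exp (- x\<^sup>2 / 2)"
      by (auto intro!: derivative_eq_intros)
  next
    show "((\<lambda>s::real. - exp (- s\<^sup>2 / 2)) \<longlongrightarrow> 0) at_top"
      by real_asymp
  qed simp
  moreover have "rayleigh_pdf s * indicator {c..} s = s * exp (- s\<^sup>2 / 2) * indicator {c'..} s" for s
    by (auto simp: rayleigh_pdf_def c'_def indicator_def)
  ultimately have "(\<integral>\<^sup>+s. ennreal (rayleigh_pdf s * indicator {c..} s) \<partial>lborel) = ennreal (exp (- c'\<^sup>2 / 2))"
    by (simp add: indicator_mult_ennreal mult.commute)
  then show ?thesis
    unfolding c'_def
    by (intro has_bochner_integral_nn_integral) (auto simp: rayleigh_pdf_nonneg)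
qed

lemma has_bochner_integral_rayleigh_tail_open:
  "has_bochner_integral lborel (\<lambda>s. rayleigh_pdf s * indicator {c<..} s) (exp (- (max c 0)\<^sup>2 / 2))"
proof -
  have "AE s in lborel. rayleigh_pdf s * indicator {c..} s = rayleigh_pdf s * indicator {c<..} s"
    using AE_lborel_singleton[of c] by eventually_elim (auto simp: indicator_def)
  with has_bochner_integral_rayleigh_tail[of c] show ?thesis
    by (subst (asm) has_bochner_integral_cong_AE) auto
qed

lemma has_bochner_integral_rayleigh_pdf: "has_bochner_integral lborel rayleigh_pdf 1"
proof -
  have "(\<lambda>s. rayleigh_pdf s * indicator {0..} s) = rayleigh_pdf"
    by (auto simp: fun_eq_iff rayleigh_pdf_def indicator_def)
  then show ?thesis
    using has_bochner_integral_rayleigh_tail[of 0] by simp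
qed

lemma has_bochner_integral_rayleigh_sgn0:
  assumes "a \<noteq> 0"
  shows "has_bochner_integral lborel (\<lambda>s. rayleigh_pdf s * sgn0 (d - a * s))
           (sgn a * (1 - 2 * exp (- (max (d / a) 0)\<^sup>2 / 2)))"
proof (cases "a > 0")
  case True
  then have "d - a * s > 0 \<longleftrightarrow> s < d / a" for s
    by (simp add: field_simps)
  then have "rayleigh_pdf s * sgn0 (d - a * s) = rayleigh_pdf s - 2 * (rayleigh_pdf s * indicator {d / a..} s)" for s
    by (auto simp: sgn0_def indicator_def)
  moreover have "has_bochner_integral lborel (\<lambda>s. rayleigh_pdf s - 2 * (rayleigh_pdf s * indicator {d / a..} s))
      (1 - 2 * exp (- (max (d / a) 0)\<^sup>2 / 2))"
    by (intro has_bochner_integral_diff has_bochner_integral_mult_right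
          has_bochner_integral_rayleigh_pdf has_bochner_integral_rayleigh_tail)
  ultimately show ?thesis
    using True by simp
next
  case False
  with assms have "a < 0" by simp
  then have "d - a * s > 0 \<longleftrightarrow> s > d / a" for s
    by (simp add: field_simps)
  then have "rayleigh_pdf s * sgn0 (d - a * s) = 2 * (rayleigh_pdf s * indicator {d / a<..} s) - rayleigh_pdf s" for s
    by (auto simp: sgn0_def indicator_def)
  moreover have "has_bochner_integral lborel (\<lambda>s. 2 * (rayleigh_pdf s * indicator {d / a<..} s) - rayleigh_pdf s)
      (2 * exp (- (max (d / a) 0)\<^sup>2 / 2) - 1)"
    by (intro has_bochner_integral_diff has_bochner_integral_mult_right
          has_bochner_integral_rayleigh_pdf has_bochner_integral_rayleigh_tail_open)
  ultimately show ?thesis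
    using \<open>a < 0\<close> by simp
qed

lemma has_bochner_integral_gaussian_half_lines:
  fixes k :: real
  assumes "k > 0"
  shows "has_bochner_integral lborel (\<lambda>x. indicator {0..} x * exp (- k * x\<^sup>2)) (sqrt pi / (2 * sqrt k))"
    and "has_bochner_integral lborel (\<lambda>x. indicator {..0} x * exp (- k * x\<^sup>2)) (sqrt pi / (2 * sqrt k))"
proof -
  have sk: "sqrt k > 0"
    using assms by simp
  have rescale: "sqrt pi / (2 * sqrt k) = (sqrt pi / 2) /\<^sub>R \<bar>c\<bar>" if "\<bar>c\<bar> = sqrt k" for c
    using that by (simp add: field_simps)
  have scaled: "has_bochner_integral lborel
      (\<lambda>x. indicator {0..} (0 + c * x) *\<^sub>R exp (- (0 + c * x)\<^sup>2)) ((sqrt pi / 2) /\<^sub>R \<bar>c\<bar>)"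
    if "c \<noteq> 0" for c :: real
    by (rule lborel_has_bochner_integral_real_affine_iff[OF that, THEN iffD1]) (rule gaussian_moment_0)
  have "indicator {0..} (0 + sqrt k * x) *\<^sub>R exp (- (0 + sqrt k * x)\<^sup>2)
      = indicator {0..} x * exp (- k * x\<^sup>2)" for x
    using sk assms by (auto simp: indicator_def power_mult_distrib zero_le_mult_iff)
  with scaled[of "sqrt k"] sk show "has_bochner_integral lborel (\<lambda>x. indicator {0..} x * exp (- k * x\<^sup>2)) (sqrt pi / (2 * sqrt k))"
    by (simp only: rescale[of "sqrt k"])
  have "indicator {0..} (0 + - sqrt k * x) *\<^sub>R exp (- (0 + - sqrt k * x)\<^sup>2)
      = indicator {..0} x * exp (- k * x\<^sup>2)" for x
    using sk assms by (auto simp: indicator_def power_mult_distrib zero_le_mult_iff mult_le_0_iff)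
  with scaled[of "- sqrt k"] sk show "has_bochner_integral lborel (\<lambda>x. indicator {..0} x * exp (- k * x\<^sup>2)) (sqrt pi / (2 * sqrt k))"
    by (simp only: rescale[of "- sqrt k"])
qed

lemma has_bochner_integral_normal_density_weighted_half_lines:
  fixes \<sigma> c :: real
  assumes \<sigma>: "\<sigma> > 0" and c: "c \<ge> 0"
  shows "has_bochner_integral lborel
           (\<lambda>x. indicator {0..} x * (normal_density 0 \<sigma> x * exp (- c * x\<^sup>2 / 2))) (1 / (2 * sqrt (1 + c * \<sigma>\<^sup>2)))"
    and "has_bochner_integral lborel
           (\<lambda>x. indicator {..0} x * (normal_density 0 \<sigma> x * exp (- c * x\<^sup>2 / 2))) (1 / (2 * sqrt (1 + c * \<sigma>\<^sup>2)))"
proof -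
  define C where "C = 1 / sqrt (2 * pi * \<sigma>\<^sup>2)"
  define k where "k = (1 + c * \<sigma>\<^sup>2) / (2 * \<sigma>\<^sup>2)"
  have k: "k > 0"
    using \<sigma> c unfolding k_def by (simp add: add_pos_nonneg)
  have "- x\<^sup>2 / (2 * \<sigma>\<^sup>2) + - c * x\<^sup>2 / 2 = - k * x\<^sup>2" for x
    using \<sigma> unfolding k_def by (simp add: field_simps)
  then have density: "normal_density 0 \<sigma> x * exp (- c * x\<^sup>2 / 2) = C * exp (- k * x\<^sup>2)" for x
    unfolding normal_density_def C_def by (simp add: exp_add[symmetric])
  have "sqrt k = sqrt (1 + c * \<sigma>\<^sup>2) / (sqrt 2 * \<sigma>)"
    using \<sigma> unfolding k_def by (simp add: real_sqrt_divide real_sqrt_mult)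
  then have total: "C * (sqrt pi / (2 * sqrt k)) = 1 / (2 * sqrt (1 + c * \<sigma>\<^sup>2))"
    using \<sigma> unfolding C_def by (simp add: real_sqrt_mult)
  have weighted: "(\<lambda>x. indicator H x * (normal_density 0 \<sigma> x * exp (- c * x\<^sup>2 / 2)))
      = (\<lambda>x. C * (indicator H x * exp (- k * x\<^sup>2)))" for H
    by (simp only: density mult.left_commute)
  show "has_bochner_integral lborel
           (\<lambda>x. indicator {0..} x * (normal_density 0 \<sigma> x * exp (- c * x\<^sup>2 / 2))) (1 / (2 * sqrt (1 + c * \<sigma>\<^sup>2)))"
    and "has_bochner_integral lborel
           (\<lambda>x. indicator {..0} x * (normal_density 0 \<sigma> x * exp (- c * x\<^sup>2 / 2))) (1 / (2 * sqrt (1 + c * \<sigma>\<^sup>2)))"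
    unfolding weighted total[symmetric]
    by (intro has_bochner_integral_mult_right has_bochner_integral_gaussian_half_lines k)+
qed

lemma has_bochner_integral_normal_sgn0:
  assumes \<sigma>: "\<sigma> > 0"
  shows "has_bochner_integral lborel (\<lambda>x. normal_density 0 \<sigma> x * sgn0 x) 0"
proof -
  have "AE x in lborel. indicator {0..} x * (normal_density 0 \<sigma> x * exp (- 0 * x\<^sup>2 / 2))
      - indicator {..0} x * (normal_density 0 \<sigma> x * exp (- 0 * x\<^sup>2 / 2)) = normal_density 0 \<sigma> x * sgn0 x"
    using AE_lborel_singleton[of 0] by eventually_elim (auto simp: sgn0_def indicator_def)
  moreover have "has_bochner_integral lborel
      (\<lambda>x. indicator {0..} x * (normal_density 0 \<sigma> x * exp (- 0 * x\<^sup>2 / 2))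
         - indicator {..0} x * (normal_density 0 \<sigma> x * exp (- 0 * x\<^sup>2 / 2))) 0"
    using has_bochner_integral_diff[OF has_bochner_integral_normal_density_weighted_half_lines[OF \<sigma>, of 0]]
    by simp
  ultimately show ?thesis
    by (subst (asm) has_bochner_integral_cong_AE) auto
qed

lemma has_bochner_integral_normal_rayleigh_sgn0:
  assumes \<sigma>: "\<sigma> > 0" and a: "a \<noteq> 0"
  shows "has_bochner_integral lborel
           (\<lambda>x. normal_density 0 \<sigma> x * (sgn a * (1 - 2 * exp (- (max (x / a) 0)\<^sup>2 / 2))))
           (- a / sqrt (a\<^sup>2 + \<sigma>\<^sup>2))"
proof -
  \<comment> \<open>Off 0, the factor exp (- (max (x / a) 0)^2 / 2) is 1 on P and exp (- c x^2 / 2) on Q.\<close>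
  define c where "c = 1 / a\<^sup>2"
  define P :: "real set" where "P = (if a > 0 then {..0} else {0..})"
  define Q :: "real set" where "Q = (if a > 0 then {0..} else {..0})"
  have c: "c \<ge> 0"
    by (simp add: c_def)
  let ?w = "\<lambda>H c x. indicator H x * (normal_density 0 \<sigma> x * exp (- c * x\<^sup>2 / 2))"
  have "has_bochner_integral lborel (?w P 0) (1 / 2)"
    using has_bochner_integral_normal_density_weighted_half_lines[OF \<sigma> order_refl]
    by (simp add: P_def)
  moreover have "has_bochner_integral lborel (?w Q c) (1 / (2 * sqrt (1 + c * \<sigma>\<^sup>2)))"
    using has_bochner_integral_normal_density_weighted_half_lines[OF \<sigma> c]
    by (simp add: Q_def)
  ultimately have split: "has_bochner_integral lborel
      (\<lambda>x. sgn a * (normal_density 0 \<sigma> x - 2 * (?w P 0 x + ?w Q c x)))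
      (sgn a * (1 - 2 * (1 / 2 + 1 / (2 * sqrt (1 + c * \<sigma>\<^sup>2)))))"
    by (intro has_bochner_integral_mult_right has_bochner_integral_diff has_bochner_integral_add)
       (auto simp: has_bochner_integral_iff \<sigma>)
  moreover have "AE x in lborel. sgn a * (normal_density 0 \<sigma> x - 2 * (?w P 0 x + ?w Q c x))
      = normal_density 0 \<sigma> x * (sgn a * (1 - 2 * exp (- (max (x / a) 0)\<^sup>2 / 2)))"
    using AE_lborel_singleton[of 0]
  proof eventually_elim
    case (elim x)
    have "exp (- (max (x / a) 0)\<^sup>2 / 2) = indicator P x * exp (- 0 * x\<^sup>2 / 2) + indicator Q x * exp (- c * x\<^sup>2 / 2)"
      using a elim
      by (cases "a > 0"; cases "x > 0")
         (auto simp: P_def Q_def c_def indicator_def max_def divide_le_0_iff power_divide)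
    then show ?case
      by (simp add: algebra_simps)
  qed
  moreover have "sgn a * (1 - 2 * (1 / 2 + 1 / (2 * sqrt (1 + c * \<sigma>\<^sup>2)))) = - a / sqrt (a\<^sup>2 + \<sigma>\<^sup>2)"
  proof -
    have "sqrt (1 + c * \<sigma>\<^sup>2) = sqrt (a\<^sup>2 + \<sigma>\<^sup>2) / \<bar>a\<bar>"
      using a by (simp add: c_def field_simps real_sqrt_divide)
    then show ?thesis
      using a by (simp add: sgn_if)
  qed
  ultimately show ?thesis
    using borel_measurable_has_bochner_integral[OF split]
    by (subst (asm) has_bochner_integral_cong_AE) auto
qed

lemma Int_stable_vimage_sets: "Int_stable {f -` A \<inter> \<Omega> | A. A \<in> sets N}"
proof (rule Int_stableI)
  fix x y assume "x \<in> {f -` A \<inter> \<Omega> | A. A \<in> sets N}" "y \<in> {f -` A \<inter> \<Omega> | A. A \<in> sets N}"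
  then obtain A B where "x = f -` A \<inter> \<Omega>" "y = f -` B \<inter> \<Omega>" "A \<in> sets N" "B \<in> sets N"
    by blast
  then show "x \<inter> y \<in> {f -` A \<inter> \<Omega> | A. A \<in> sets N}"
    by (intro CollectI exI[of _ "A \<inter> B"]) auto
qed

lemma (in prob_space) indep_var_process_component:
  fixes X :: "'a \<Rightarrow> 'b" and Y :: "'i \<Rightarrow> 'a \<Rightarrow> 'b"
  assumes indep: "indep_set {X -` A \<inter> space M | A. A \<in> sets S}
      {(\<lambda>\<omega>. restrict (\<lambda>s. Y s \<omega>) I) -` B \<inter> space M | B. B \<in> sets (Pi\<^sub>M I (\<lambda>_. N))}"
    and X: "random_variable S X"
    and Y: "\<And>s. s \<in> I \<Longrightarrow> random_variable N (Y s)"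
    and t: "t \<in> I"
  shows "indep_var S X N (Y t)"
proof -
  define F where "F = (\<lambda>\<omega>. restrict (\<lambda>s. Y s \<omega>) I)"
  have F: "random_variable (Pi\<^sub>M I (\<lambda>_. N)) F"
    unfolding F_def using Y by (rule measurable_restrict)
  have component: "{Y t -` A \<inter> space M | A. A \<in> sets N}
      \<subseteq> {F -` B \<inter> space M | B. B \<in> sets (Pi\<^sub>M I (\<lambda>_. N))}"
  proof safe
    fix A assume "A \<in> sets N"
    with measurable_component_singleton[OF t]
    have "(\<lambda>f. f t) -` A \<inter> space (Pi\<^sub>M I (\<lambda>_. N)) \<in> sets (Pi\<^sub>M I (\<lambda>_. N))"
      by (rule measurable_sets)
    moreover have "Y t -` A \<inter> space M = F -` ((\<lambda>f. f t) -` A \<inter> space (Pi\<^sub>M I (\<lambda>_. N))) \<inter> space M"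
      using t measurable_space[OF F] by (auto simp: F_def)
    ultimately show "\<exists>B. Y t -` A \<inter> space M = F -` B \<inter> space M \<and> B \<in> sets (Pi\<^sub>M I (\<lambda>_. N))"
      by blast
  qed
  have "indep_set (sigma_sets (space M) {X -` A \<inter> space M | A. A \<in> sets S})
      (sigma_sets (space M) {F -` B \<inter> space M | B. B \<in> sets (Pi\<^sub>M I (\<lambda>_. N))})"
    using indep_set_sigma_sets[OF indep Int_stable_vimage_sets Int_stable_vimage_sets]
    by (simp add: F_def)
  then have "indep_set (sigma_sets (space M) {X -` A \<inter> space M | A. A \<in> sets S})
      (sigma_sets (space M) {Y t -` A \<inter> space M | A. A \<in> sets N})"
    unfolding indep_set_def
    by (rule indep_sets_mono_sets) (auto split: bool.split intro: sigma_sets_subseteq[OF component, THEN subsetD])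
  then show ?thesis
    unfolding indep_var_eq using X Y t by blast
qed

lemma (in prob_space) expectation_indep_var_iterated_integral:
  assumes X: "distributed M lborel X (\<lambda>x. ennreal (p x))" "p \<in> borel_measurable borel" "\<And>x. 0 \<le> p x"
    and Y: "distributed M lborel Y (\<lambda>y. ennreal (q y))" "q \<in> borel_measurable borel" "\<And>y. 0 \<le> q y"
    and indep: "indep_var borel X borel Y"
    and f: "case_prod f \<in> borel_measurable (borel \<Otimes>\<^sub>M borel)"
    and bounded: "\<And>x y. \<bar>f x y\<bar> \<le> B"
  shows "expectation (\<lambda>\<omega>. f (X \<omega>) (Y \<omega>)) = (\<integral>y. q y * (\<integral>x. p x * f x y \<partial>lborel) \<partial>lborel)"
proof -
  note [measurable] = distributed_measurable[OF X(1)] distributed_measurable[OF Y(1)] f X(2) Y(2)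
  define PX where "PX = distr M lborel X"
  define PY where "PY = distr M lborel Y"
  interpret PX: prob_space PX
    unfolding PX_def by (rule prob_space_distr) measurable
  interpret PY: prob_space PY
    unfolding PY_def by (rule prob_space_distr) measurable
  interpret PXY: pair_prob_space PX PY ..
  have "indep_var lborel X lborel Y"
    using indep unfolding indep_var_eq by simp
  then have joint: "PX \<Otimes>\<^sub>M PY = distr M (lborel \<Otimes>\<^sub>M lborel) (\<lambda>\<omega>. (X \<omega>, Y \<omega>))"
    unfolding indep_var_distribution_eq PX_def PY_def by simp
  have integrable: "integrable (PX \<Otimes>\<^sub>M PY) (case_prod f)"
    using bounded by (intro PXY.P.integrable_const_bound[where B = B]) (auto simp: PX_def PY_def)
  have inner: "(\<integral>x. f x y \<partial>PX) = (\<integral>x. p x * f x y \<partial>lborel)" for y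
    unfolding PX_def distributed_distr_eq_density[OF X(1)]
    by (subst integral_density) (auto simp: X(3))
  have "expectation (\<lambda>\<omega>. f (X \<omega>) (Y \<omega>)) = integral\<^sup>L (PX \<Otimes>\<^sub>M PY) (case_prod f)"
    unfolding joint by (subst integral_distr) auto
  also have "\<dots> = (\<integral>y. (\<integral>x. f x y \<partial>PX) \<partial>PY)"
    using integrable by (rule PXY.integral_snd[symmetric])
  also have "\<dots> = (\<integral>y. q y * (\<integral>x. p x * f x y \<partial>lborel) \<partial>lborel)"
    unfolding inner PY_def distributed_distr_eq_density[OF Y(1)]
    by (subst integral_density) (auto simp: Y(3))
  finally show ?thesis .
qed

lemma (in prob_space) expectation_sgn0_normal_minus_rayleigh:
  assumes D: "distributed M lborel D (normal_density 0 \<sigma>)" and \<sigma>: "\<sigma> > 0"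
    and R: "distributed M lborel R rayleigh_density"
    and indep: "indep_var borel R borel D"
  shows "expectation (\<lambda>\<omega>. sgn0 (D \<omega> - a * R \<omega>)) = - a / sqrt (a\<^sup>2 + \<sigma>\<^sup>2)"
proof (cases "a = 0")
  case True
  have "expectation (\<lambda>\<omega>. sgn0 (D \<omega>)) = (\<integral>x. normal_density 0 \<sigma> x * sgn0 x \<partial>lborel)"
    by (rule distributed_integral[OF D, symmetric]) auto
  with has_bochner_integral_normal_sgn0[OF \<sigma>] True show ?thesis
    by (simp add: has_bochner_integral_iff)
next
  case False
  have "expectation (\<lambda>\<omega>. sgn0 (D \<omega> - a * R \<omega>))
      = (\<integral>x. normal_density 0 \<sigma> x * (\<integral>s. rayleigh_pdf s * sgn0 (x - a * s) \<partial>lborel) \<partial>lborel)"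
    using R unfolding rayleigh_density_eq
    by (intro expectation_indep_var_iterated_integral[OF _ _ _ D _ _ indep, where B = 1])
       (auto simp: rayleigh_pdf_nonneg sgn0_def)
  also have "\<dots> = (\<integral>x. normal_density 0 \<sigma> x * (sgn a * (1 - 2 * exp (- (max (x / a) 0)\<^sup>2 / 2))) \<partial>lborel)"
    using has_bochner_integral_rayleigh_sgn0[OF False] by (simp add: has_bochner_integral_iff)
  also have "\<dots> = - a / sqrt (a\<^sup>2 + \<sigma>\<^sup>2)"
    using has_bochner_integral_normal_rayleigh_sgn0[OF \<sigma> False] by (simp add: has_bochner_integral_iff)
  finally show ?thesis .
qed

lemma (in prob_space) expectation_sgn0_AE_zero_minus_rayleigh:
  assumes D: "random_variable borel D" "AE \<omega> in M. D \<omega> = 0"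
    and R: "distributed M lborel R rayleigh_density"
    and a: "a \<noteq> 0"
  shows "expectation (\<lambda>\<omega>. sgn0 (D \<omega> - a * R \<omega>)) = - sgn a"
proof -
  have R': "distributed M lborel R (\<lambda>s. ennreal (rayleigh_pdf s))"
    using R by (simp add: rayleigh_density_eq)
  have "expectation (\<lambda>\<omega>. sgn0 (D \<omega> - a * R \<omega>)) = expectation (\<lambda>\<omega>. sgn0 (0 - a * R \<omega>))"
    using D distributed_measurable[OF R'] by (intro integral_cong_AE) auto
  also have "\<dots> = (\<integral>s. rayleigh_pdf s * sgn0 (0 - a * s) \<partial>lborel)"
    by (rule distributed_integral[OF R', symmetric]) (auto simp: rayleigh_pdf_nonneg)
  also have "\<dots> = - sgn a"
    using has_bochner_integral_rayleigh_sgn0[OF a, of 0] by (simp add: has_bochner_integral_iff)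
  finally show ?thesis .
qed

lemma gaussian_process_measurable:
  "gaussian_process M I X \<Longrightarrow> t \<in> I \<Longrightarrow> X t \<in> borel_measurable M"
  unfolding gaussian_process_def by blast

lemma gaussian_process_gaussian_rv:
  assumes "gaussian_process M I X" "t \<in> I"
  shows "gaussian_rv M (X t)"
  using assms(1)[unfolded gaussian_process_def, THEN conjunct2, rule_format, of "{t}" "\<lambda>_. 1"] assms(2)
  by simp

lemma (in prob_space) centered_gaussian_rv_cases:
  assumes Y: "gaussian_rv M Y" "expectation Y = 0" "expectation (\<lambda>\<omega>. Y \<omega> * Y \<omega>) = v"
  obtains "v > 0" "distributed M lborel Y (normal_density 0 (sqrt v))"
    | "v = 0" "AE \<omega> in M. Y \<omega> = 0"
proof -
  from Y(1) consider \<mu> \<sigma> where "\<sigma> > 0" "distributed M lborel Y (normal_density \<mu> \<sigma>)"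
    | c where "AE \<omega> in M. Y \<omega> = c"
    unfolding gaussian_rv_def by blast
  then show ?thesis
  proof cases
    case (1 \<mu> \<sigma>)
    then have "\<mu> = 0"
      using normal_distributed_expectation Y(2) by metis
    with 1 have normal: "distributed M lborel Y (normal_density 0 \<sigma>)"
      by simp
    have "v = \<sigma>\<^sup>2"
      using normal_distributed_variance[OF \<open>\<sigma> > 0\<close> normal] Y(2,3) by (simp add: power2_eq_square)
    with \<open>\<sigma> > 0\<close> normal show ?thesis
      by (intro that(1)) auto
  next
    case (2 c)
    have Y_rv: "random_variable borel Y"
      using Y(1) unfolding gaussian_rv_def by simp
    have "expectation Y = expectation (\<lambda>_. c)"
      using 2 Y_rv by (intro integral_cong_AE) auto
    then have "c = 0"
      using Y(2) prob_space by simp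
    have "v = expectation (\<lambda>_. 0)"
      unfolding Y(3)[symmetric] using 2 Y_rv \<open>c = 0\<close> by (intro integral_cong_AE) auto
    with 2 \<open>c = 0\<close> show ?thesis
      by (intro that(2)) auto
  qed
qed

lemma (in prob_space) expectation_sgn0_gaussian_minus_rayleigh:
  assumes D: "gaussian_rv M D" "expectation D = 0" "expectation (\<lambda>\<omega>. D \<omega> * D \<omega>) = v"
    and R: "distributed M lborel R rayleigh_density"
    and indep: "indep_var borel R borel D"
    and nondegenerate: "a\<^sup>2 + v > 0"
  shows "expectation (\<lambda>\<omega>. sgn0 (D \<omega> - a * R \<omega>)) = - a / sqrt (a\<^sup>2 + v)"
  using D
proof (cases rule: centered_gaussian_rv_cases)
  case 1
  then show ?thesis
    using expectation_sgn0_normal_minus_rayleigh[OF _ _ R indep, of "sqrt v" a] by simp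
next
  case 2
  then show ?thesis
    using D(1) nondegenerate expectation_sgn0_AE_zero_minus_rayleigh[OF _ _ R, of D a]
    by (simp add: gaussian_rv_def sgn_if)
qed

theorem proposition2:
  fixes M :: "'a measure"
    and X :: "real \<Rightarrow> 'a \<Rightarrow> real"
    and r r1 r2 :: "real \<Rightarrow> real"
    and R :: "'a \<Rightarrow> real"
    and \<Delta> :: "real \<Rightarrow> 'a \<Rightarrow> real"
    and X0 :: "real \<Rightarrow> 'a \<Rightarrow> real"
    and t :: real
  assumes prob: "prob_space M"
    (* X: zero-mean stationary Gaussian process with covariance r *)
    and X_gauss: "gaussian_process M UNIV X"
    and X_mean: "\<And>s. prob_space.expectation M (X s) = 0"
    and X_cov: "\<And>s u. prob_space.expectation M (\<lambda>\<omega>. X s \<omega> * X (s + u) \<omega>) = r u"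
    (* r twice continuously differentiable, r''(0) < 0 *)
    and r_d1: "\<And>u. (r has_real_derivative r1 u) (at u)"
    and r_d2: "\<And>u. (r1 has_real_derivative r2 u) (at u)"
    and r2_cont: "continuous_on UNIV r2"
    and r2_neg: "r2 0 < 0"
    (* R standard Rayleigh *)
    and R_distr: "distributed M lborel R rayleigh_density"
    (* Delta: zero-mean Gaussian process on [0,\<infinity>) with the given covariance *)
    and D_gauss: "gaussian_process M {0..} \<Delta>"
    and D_mean: "\<And>s. s \<ge> 0 \<Longrightarrow> prob_space.expectation M (\<Delta> s) = 0"
    and D_cov: "\<And>s u. s \<ge> 0 \<Longrightarrow> u \<ge> 0 \<Longrightarrow>
        prob_space.expectation M (\<lambda>\<omega>. \<Delta> s \<omega> * \<Delta> u \<omega>)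
          = r (s - u) - r s * r u / r 0 + r1 s * r1 u / r2 0"
    (* R independent of the process Delta *)
    and indep: "prob_space.indep_set M
                  {R -` A \<inter> space M | A. A \<in> sets borel}
                  {(\<lambda>\<omega>. restrict (\<lambda>s. \<Delta> s \<omega>) {0..}) -` B \<inter> space M
                     | B. B \<in> sets (Pi\<^sub>M {0..} (\<lambda>_. borel :: real measure))}"
    (* Slepian model at level zero *)
    and X0_def: "\<And>s \<omega>. s \<ge> 0 \<Longrightarrow> X0 s \<omega> = - R \<omega> * r1 s / sqrt (- r2 0) + \<Delta> s \<omega>"
    and t_pos: "t > 0"
    and t_r: "\<bar>r t\<bar> < r 0"
  shows "prob_space.expectation M (\<lambda>\<omega>. sgn0 (X0 t \<omega>))
           = - sqrt (r 0 / - r2 0) * (r1 t / sqrt ((r 0)\<^sup>2 - (r t)\<^sup>2))"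
proof -
  interpret prob_space M
    by (rule prob)
  define a where "a = r1 t / sqrt (- r2 0)"
  define v where "v = r 0 - (r t)\<^sup>2 / r 0 + (r1 t)\<^sup>2 / r2 0"
  have t: "t \<in> {0..}"
    using t_pos by simp
  have r0: "r 0 > 0"
    using t_r by linarith
  have "\<bar>r t\<bar>\<^sup>2 < (r 0)\<^sup>2"
    using t_r by (intro power_strict_mono) auto
  then have r_sq: "(r 0)\<^sup>2 - (r t)\<^sup>2 > 0"
    by simp
  have indep_t: "indep_var borel R borel (\<Delta> t)"
    using distributed_measurable[OF R_distr] gaussian_process_measurable[OF D_gauss]
    by (intro indep_var_process_component[OF indep _ _ t]) simp_all
  have var_t: "expectation (\<lambda>\<omega>. \<Delta> t \<omega> * \<Delta> t \<omega>) = v"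
    using D_cov[of t t] t_pos by (simp add: v_def power2_eq_square)
  have "a\<^sup>2 = - ((r1 t)\<^sup>2 / r2 0)"
    using r2_neg by (simp add: a_def power_divide)
  then have total: "a\<^sup>2 + v = ((r 0)\<^sup>2 - (r t)\<^sup>2) / r 0"
    using r0 by (simp add: v_def diff_divide_distrib power2_eq_square)
  have "X0 t \<omega> = \<Delta> t \<omega> - a * R \<omega>" for \<omega>
    using X0_def[of t \<omega>] t_pos by (simp add: a_def)
  then have "expectation (\<lambda>\<omega>. sgn0 (X0 t \<omega>)) = - a / sqrt (a\<^sup>2 + v)"
    using expectation_sgn0_gaussian_minus_rayleigh[OF gaussian_process_gaussian_rv[OF D_gauss t] D_mean var_t R_distr indep_t] t_pos r0 r_sq
    by (simp add: total)
  also have "\<dots> = - sqrt (r 0 / - r2 0) * (r1 t / sqrt ((r 0)\<^sup>2 - (r t)\<^sup>2))"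
    unfolding total unfolding a_def real_sqrt_divide using r0 r2_neg r_sq by (simp add: field_simps)
  finally show ?thesis .
qed

end
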